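(* Let $\bar R_m(\varepsilon)$ be defined by $\bar R_1(\varepsilon)=\varepsilon$ and, for $m\ge2$, $\big[(-1)^m(1+\varepsilon)^m+(1+\varepsilon)\big]\bar R_m(\varepsilon)=-(3+\varepsilon)\sum_{j=1}^{m-1}\bar R_j(\varepsilon)\bar R_{m-j}(\varepsilon)$. Write the expansions at $\varepsilon=0$ as $$\bar R_{2m+1}(\varepsilon)=\varepsilon^{m+1}\big(a_m+b_m\varepsilon+O(\varepsilon^2)\big)\ (m\ge0),\qquad \bar R_{2n}(\varepsilon)=\varepsilon^{n+1}\big(c_n+d_n\varepsilon+O(\varepsilon^2)\big)\ (n\ge1).$$ Then, for $|\tau|<1/3$, $$\sum_{m\ge0}b_m\tau^{2m+1}=-\frac{\tau\big(45\tau^2-33\log(1+9\tau^2)\big)}{24\,(1+9\tau^2)^{3/2}},\qquad \sum_{n\ge1}d_n\tau^{2n}=\frac{\tau^2\big(14+36\tau^2-33\log(1+9\tau^2)\big)}{8\,(1+9\tau^2)^2}.$$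
   Context: The $\bar R_m$ are the coefficient functions of the transseries solution of the static logistic map $y(n+1)=(3+\varepsilon)y(n)(1-y(n))$ about its fixed point $(2+\varepsilon)/(3+\varepsilon)$, normalised by $\bar R_1=\varepsilon$; each $\bar R_m$ is a rational function of $\varepsilon$ analytic at $0$ with the stated orders of vanishing. $\log$ denotes the real natural logarithm. *)

theory Defs
  imports "HOL-Analysis.Analysis" "HOL-Library.Landau_Symbols"
begin

text \<open>The coefficient functions of the transseries, as real rational functions of eps
  (evaluated pointwise; they are well defined for eps in a punctured neighbourhood of 0).\<close>
function Rbar :: "nat \<Rightarrow> real \<Rightarrow> real" where
  "Rbar 0 e = 0"
| "Rbar (Suc 0) e = e"
| "Rbar (Suc (Suc k)) e =
     - (3 + e) * (\<Sum>j\<in>{1..Suc k}. Rbar j e * Rbar (Suc (Suc k) - j) e)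
     / ((-1) ^ (Suc (Suc k)) * (1 + e) ^ (Suc (Suc k)) + (1 + e))"
  by pat_completeness auto
termination
  by (relation "Wellfounded.measure fst") auto

end

theory Submission
  imports Defs
begin

(* After dividing out the order of vanishing of R_k, the recurrence becomes a quadratic
   convolution identity between the rescaled coefficient functions; comparing the terms of
   order e^0 and e^1 yields recursions for a, b, c, d. For the generating functions
   alpha = sum a_m x^m, beta = sum b_m x^m, gamma = sum c_n x^n, delta = sum d_n x^n these
   recursions form a system of first-order ODEs for formal power series which, together with
   a_0 = 1 and b_0 = 0 (from R_1 = e), has a unique solution:
   alpha = (1+9x)^(-1/2), 8 beta = (1+9x)^(-3/2) (11 log(1+9x) - 15x) and
   8 delta = x (14 + 36x - 33 log(1+9x)) (1+9x)^(-2).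
   These series converge for |x| < 1/9, and evaluating them at x = tau^2 gives the sums. *)

unbundle no vec_syntax
unbundle fps_syntax

section \<open>First-order expansions at 0\<close>

definition first_order_expansion :: "(real \<Rightarrow> real) \<Rightarrow> real \<Rightarrow> real \<Rightarrow> bool" where
  "first_order_expansion f a b \<longleftrightarrow> ((\<lambda>e. (f e - a - b * e) / e) \<longlongrightarrow> 0) (at 0)"

lemma eventually_nonzero_at_0: "eventually (\<lambda>e::real. e \<noteq> 0) (at 0)"
  by (simp add: eventually_at_filter)

lemma first_order_expansion_tendsto:
  assumes "first_order_expansion f a b"
  shows "(f \<longlongrightarrow> a) (at 0)"
proof -
  define h where "h e = (f e - a - b * e) / e" for e
  have "((\<lambda>e. a + b * e + e * h e) \<longlongrightarrow> a + b * 0 + 0 * 0) (at 0)"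
    using assms unfolding first_order_expansion_def h_def by (intro tendsto_intros)
  moreover have "eventually (\<lambda>e. a + b * e + e * h e = f e) (at 0)"
    using eventually_nonzero_at_0 by eventually_elim (simp add: h_def)
  ultimately show ?thesis
    by (simp add: tendsto_cong)
qed

lemma first_order_expansion_unique:
  assumes "first_order_expansion f a b" and "first_order_expansion f a' b'"
  shows "a = a'" and "b = b'"
proof -
  show "a = a'"
    using assms(1,2)[THEN first_order_expansion_tendsto] by (rule tendsto_unique[OF at_neq_bot])
  have "((\<lambda>e. (f e - a - b * e) / e - (f e - a' - b' * e) / e) \<longlongrightarrow> 0 - 0) (at 0)"
    using assms unfolding first_order_expansion_def by (intro tendsto_diff)
  moreover have "eventually (\<lambda>e. (f e - a - b * e) / e - (f e - a' - b' * e) / e = b' - b) (at 0)"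
    using eventually_nonzero_at_0 by eventually_elim (simp add: \<open>a = a'\<close> field_simps)
  ultimately have "((\<lambda>e. b' - b) \<longlongrightarrow> 0) (at (0::real))"
    by (simp add: tendsto_cong)
  then show "b = b'"
    by (simp add: tendsto_const_iff)
qed

lemma first_order_expansion_cong:
  assumes "first_order_expansion f a b" and "eventually (\<lambda>e. f e = g e) (at 0)"
  shows "first_order_expansion g a b"
proof -
  have "eventually (\<lambda>e. (f e - a - b * e) / e = (g e - a - b * e) / e) (at 0)"
    using assms(2) by eventually_elim simp
  with assms(1) show ?thesis
    unfolding first_order_expansion_def by (simp add: tendsto_cong)
qed

lemma first_order_expansion_const: "first_order_expansion (\<lambda>_. c) c 0"
  by (simp add: first_order_expansion_def)

lemma first_order_expansion_affine: "first_order_expansion (\<lambda>e. p + q * e) p q"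
  by (simp add: first_order_expansion_def)

lemma first_order_expansion_add:
  assumes "first_order_expansion f a b" and "first_order_expansion g c d"
  shows "first_order_expansion (\<lambda>e. f e + g e) (a + c) (b + d)"
proof -
  have "((\<lambda>e. (f e - a - b * e) / e + (g e - c - d * e) / e) \<longlongrightarrow> 0 + 0) (at 0)"
    using assms unfolding first_order_expansion_def by (intro tendsto_add)
  moreover have "eventually (\<lambda>e. (f e - a - b * e) / e + (g e - c - d * e) / e
      = (f e + g e - (a + c) - (b + d) * e) / e) (at 0)"
    using eventually_nonzero_at_0 by eventually_elim (simp add: field_simps)
  ultimately show ?thesis
    unfolding first_order_expansion_def by (simp add: tendsto_cong)
qed

lemma first_order_expansion_mult:
  assumes "first_order_expansion f a b" and "first_order_expansion g c d"
  shows "first_order_expansion (\<lambda>e. f e * g e) (a * c) (a * d + b * c)"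
proof -
  define h\<^sub>f where "h\<^sub>f e = (f e - a - b * e) / e" for e
  define h\<^sub>g where "h\<^sub>g e = (g e - c - d * e) / e" for e
  have "((\<lambda>e. h\<^sub>f e * g e + (a + b * e) * h\<^sub>g e + b * d * e) \<longlongrightarrow> 0 * c + (a + b * 0) * 0 + b * d * 0) (at 0)"
    using assms first_order_expansion_tendsto[OF assms(2)]
    unfolding first_order_expansion_def h\<^sub>f_def h\<^sub>g_def
    by (intro tendsto_intros) auto
  moreover have "eventually (\<lambda>e. h\<^sub>f e * g e + (a + b * e) * h\<^sub>g e + b * d * e
      = (f e * g e - a * c - (a * d + b * c) * e) / e) (at 0)"
    using eventually_nonzero_at_0 by eventually_elim (simp add: h\<^sub>f_def h\<^sub>g_def field_simps)
  ultimately show ?thesis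
    unfolding first_order_expansion_def by (simp add: tendsto_cong)
qed

lemma first_order_expansion_sum:
  assumes "\<And>i. i \<in> I \<Longrightarrow> first_order_expansion (f i) (a i) (b i)"
  shows "first_order_expansion (\<lambda>e. \<Sum>i\<in>I. f i e) (\<Sum>i\<in>I. a i) (\<Sum>i\<in>I. b i)"
  using assms
  by (induction I rule: infinite_finite_induct)
     (simp_all add: first_order_expansion_const first_order_expansion_add)

lemma first_order_expansion_times_ident:
  assumes "first_order_expansion f a b"
  shows "first_order_expansion (\<lambda>e. e * f e) 0 a"
proof -
  have "((\<lambda>e. f e - a) \<longlongrightarrow> a - a) (at 0)"
    using first_order_expansion_tendsto[OF assms] by (intro tendsto_intros)
  moreover have "eventually (\<lambda>e. f e - a = (e * f e - 0 - a * e) / e) (at 0)"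
    using eventually_nonzero_at_0 by eventually_elim (simp add: field_simps)
  ultimately show ?thesis
    unfolding first_order_expansion_def by (simp add: tendsto_cong)
qed

lemma first_order_expansion_one_plus_power:
  "first_order_expansion (\<lambda>e. (1 + e) ^ i) 1 (real i)"
proof (induction i)
  case 0
  show ?case using first_order_expansion_const[of 1] by simp
next
  case (Suc i)
  from first_order_expansion_mult[OF first_order_expansion_affine[of 1 1] Suc] show ?case
    by (simp add: algebra_simps)
qed

lemma first_order_expansion_of_bigo:
  assumes "(\<lambda>e. R e - e ^ v * (a + b * e)) \<in> O[at 0](\<lambda>e. e ^ (v + 2))"
  shows "first_order_expansion (\<lambda>e. R e / e ^ v) a b"
proof -
  from assms obtain C where "C > 0"
    and bound: "eventually (\<lambda>e. norm (R e - e ^ v * (a + b * e)) \<le> C * norm (e ^ (v + 2))) (at 0)"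
    by (elim landau_o.bigE)
  have "eventually (\<lambda>e. norm ((R e / e ^ v - a - b * e) / e) \<le> C * \<bar>e\<bar>) (at 0)"
    using bound eventually_nonzero_at_0
  proof eventually_elim
    case (elim e)
    have "norm ((R e / e ^ v - a - b * e) / e) = norm (R e - e ^ v * (a + b * e)) / \<bar>e\<bar> ^ (v + 1)"
      using elim(2) by (simp add: field_simps power_abs abs_mult)
    also have "\<dots> \<le> C * norm (e ^ (v + 2)) / \<bar>e\<bar> ^ (v + 1)"
      using elim by (intro divide_right_mono) auto
    also have "\<dots> = C * \<bar>e\<bar>"
      using elim(2) by (simp add: power_abs abs_mult)
    finally show ?case .
  qed
  moreover have "((\<lambda>e. C * \<bar>e\<bar>) \<longlongrightarrow> 0) (at (0::real))"
    using tendsto_mult_left[OF tendsto_rabs[OF tendsto_ident_at], of C 0 UNIV] by simp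
  ultimately show ?thesis
    unfolding first_order_expansion_def by (rule Lim_null_comparison)
qed

section \<open>The rescaled recurrence\<close>

definition Rbar_denom :: "nat \<Rightarrow> real \<Rightarrow> real" where
  "Rbar_denom k e = (-1) ^ k * (1 + e) ^ k + (1 + e)"

lemma Rbar_recurrence:
  assumes "k \<ge> 2" and "Rbar_denom k e \<noteq> 0"
  shows "Rbar k e * Rbar_denom k e = -(3 + e) * (\<Sum>j\<in>{1..k-1}. Rbar j e * Rbar (k - j) e)"
proof -
  obtain k' where "k = Suc (Suc k')"
    using assms(1) by (metis add_2_eq_Suc le_Suc_ex)
  with assms(2) show ?thesis
    by (simp add: Rbar_denom_def)
qed

lemma Rbar_denom_odd:
  "Rbar_denom (2 * m + 1) e = e * (- ((1 + e) * (\<Sum>i<2*m. (1 + e) ^ i)))"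
proof -
  have "Rbar_denom (2 * m + 1) e = (1 + e) * (1 - (1 + e) ^ (2 * m))"
    by (simp add: Rbar_denom_def algebra_simps)
  also have "\<dots> = (1 + e) * ((1 - (1 + e)) * (\<Sum>i<2*m. (1 + e) ^ i))"
    by (simp only: one_diff_power_eq)
  finally show ?thesis
    by (simp add: algebra_simps)
qed

lemma Rbar_denom_nonzero:
  assumes "k \<ge> 2" and "e \<noteq> 0" and "\<bar>e\<bar> < 1"
  shows "Rbar_denom k e \<noteq> 0"
proof (cases "even k")
  case True
  have "(1 + e) ^ k > 0" and "1 + e > 0"
    using assms by auto
  then have "(1 + e) ^ k + (1 + e) > 0"
    by (rule add_pos_pos)
  with True show ?thesis
    by (simp add: Rbar_denom_def)
next
  case False
  then obtain m where m: "k = 2 * m + 1"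
    by (metis oddE)
  with assms have "(\<Sum>i<2*m. (1 + e) ^ i) > 0"
    by (intro sum_pos) (auto simp: lessThan_empty_iff)
  with assms show ?thesis
    unfolding m Rbar_denom_odd by simp
qed

lemma first_order_expansion_Rbar_denom_even:
  "first_order_expansion (Rbar_denom (2 * n)) 2 (2 * real n + 1)"
proof -
  have "first_order_expansion (\<lambda>e. (1 + e) ^ (2 * n) + (1 + e)) (1 + 1) (real (2 * n) + 1)"
    using first_order_expansion_add[OF first_order_expansion_one_plus_power[of "2 * n"]
        first_order_expansion_one_plus_power[of 1]]
    by simp
  then show ?thesis
    by (simp add: Rbar_denom_def[abs_def])
qed

lemma first_order_expansion_Rbar_denom_odd_quotient:
  "first_order_expansion (\<lambda>e. - ((1 + e) * (\<Sum>i<2*m. (1 + e) ^ i))) (- 2 * real m) (- real m * (2 * real m + 1))"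
proof -
  have sum_expansion: "first_order_expansion (\<lambda>e. \<Sum>i<2*m. (1 + e) ^ i) (\<Sum>i<2*m. 1) (\<Sum>i<2*m. real i)"
    by (intro first_order_expansion_sum first_order_expansion_one_plus_power)
  have "(\<Sum>i<2*m. real i) = real m * (2 * real m - 1)"
    by (induction m) (auto simp: algebra_simps)
  with first_order_expansion_mult[OF first_order_expansion_one_plus_power[of 1] sum_expansion[unfolded this]]
  have "first_order_expansion (\<lambda>e. (1 + e) * (\<Sum>i<2*m. (1 + e) ^ i)) (2 * real m) (real m * (2 * real m + 1))"
    by (simp add: algebra_simps)
  from first_order_expansion_mult[OF first_order_expansion_const[of "-1"] this] show ?thesis
    by simp
qed

(* Divides R_k by its order of vanishing at 0 (m + 1 for k = 2m + 1, n + 1 for k = 2n),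
   so that the first two Taylor coefficients of the result are a_m, b_m resp. c_n, d_n. *)
definition Rbar_scaled :: "nat \<Rightarrow> real \<Rightarrow> real" where
  "Rbar_scaled k e = Rbar k e / e ^ (k div 2 + 1)"

lemma eventually_small_nonzero_at_0: "eventually (\<lambda>e::real. e \<noteq> 0 \<and> \<bar>e\<bar> < 1) (at 0)"
proof -
  have "eventually (\<lambda>e::real. \<bar>e\<bar> < 1) (at 0)"
    by (auto simp: eventually_at intro!: exI[of _ 1])
  then show ?thesis
    using eventually_nonzero_at_0 by eventually_elim simp
qed

lemma Rbar_scaled_recurrence_odd:
  assumes "m \<ge> 1"
  shows "eventually (\<lambda>e. Rbar_scaled (2 * m + 1) e * - ((1 + e) * (\<Sum>i<2*m. (1 + e) ^ i))
      = -(3 + e) * (\<Sum>j\<in>{1..2*m}. Rbar_scaled j e * Rbar_scaled (2 * m + 1 - j) e)) (at 0)"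
  using eventually_small_nonzero_at_0
proof eventually_elim
  case (elim e)
  let ?k = "2 * m + 1"
  have unscale: "Rbar i e = Rbar_scaled i e * e ^ (i div 2 + 1)" for i
    using elim by (simp add: Rbar_scaled_def)
  have "(\<Sum>j\<in>{1..?k-1}. Rbar j e * Rbar (?k - j) e)
      = (\<Sum>j\<in>{1..2*m}. e ^ (m + 2) * (Rbar_scaled j e * Rbar_scaled (?k - j) e))"
  proof (rule sum.cong)
    fix j assume "j \<in> {1..2*m}"
    then have "j div 2 + 1 + ((?k - j) div 2 + 1) = m + 2"
      by (simp; presburger)
    moreover have "Rbar j e * Rbar (?k - j) e
        = (Rbar_scaled j e * Rbar_scaled (?k - j) e) * e ^ (j div 2 + 1 + ((?k - j) div 2 + 1))"
      unfolding unscale power_add by (simp only: mult_ac)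
    ultimately show "Rbar j e * Rbar (?k - j) e = e ^ (m + 2) * (Rbar_scaled j e * Rbar_scaled (?k - j) e)"
      by (simp only: mult_ac)
  qed simp
  moreover have "Rbar ?k e * Rbar_denom ?k e = -(3 + e) * (\<Sum>j\<in>{1..?k-1}. Rbar j e * Rbar (?k - j) e)"
    using assms elim by (intro Rbar_recurrence Rbar_denom_nonzero) simp_all
  ultimately have "Rbar ?k e * Rbar_denom ?k e
      = -(3 + e) * (e ^ (m + 2) * (\<Sum>j\<in>{1..2*m}. Rbar_scaled j e * Rbar_scaled (?k - j) e))"
    by (simp add: sum_distrib_left)
  then have "e ^ (m + 2) * (Rbar_scaled ?k e * - ((1 + e) * (\<Sum>i<2*m. (1 + e) ^ i)))
      = e ^ (m + 2) * (-(3 + e) * (\<Sum>j\<in>{1..2*m}. Rbar_scaled j e * Rbar_scaled (?k - j) e))"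
    unfolding unscale[of ?k] Rbar_denom_odd by (simp add: algebra_simps)
  moreover have "e ^ (m + 2) \<noteq> 0"
    using elim by simp
  ultimately show ?case
    using mult_left_cancel by blast
qed

(* For k = 2n, the products R_j R_(k-j) with even j vanish to one order higher than those with odd j. *)
lemma Rbar_scaled_recurrence_even:
  assumes "n \<ge> 1"
  shows "eventually (\<lambda>e. Rbar_scaled (2 * n) e * Rbar_denom (2 * n) e
      = -(3 + e) * (\<Sum>j\<in>{1..2*n-1}. (if odd j then 1 else e) * (Rbar_scaled j e * Rbar_scaled (2 * n - j) e))) (at 0)"
  using eventually_small_nonzero_at_0
proof eventually_elim
  case (elim e)
  let ?k = "2 * n"
  have unscale: "Rbar i e = Rbar_scaled i e * e ^ (i div 2 + 1)" for i
    using elim by (simp add: Rbar_scaled_def)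
  have "(\<Sum>j\<in>{1..?k-1}. Rbar j e * Rbar (?k - j) e)
      = (\<Sum>j\<in>{1..2*n-1}. e ^ (n + 1) * ((if odd j then 1 else e) * (Rbar_scaled j e * Rbar_scaled (?k - j) e)))"
  proof (rule sum.cong)
    fix j assume "j \<in> {1..2*n-1}"
    then have "j div 2 + 1 + ((?k - j) div 2 + 1) = (if odd j then n + 1 else Suc (n + 1))"
      by (simp; presburger)
    moreover have "Rbar j e * Rbar (?k - j) e
        = (Rbar_scaled j e * Rbar_scaled (?k - j) e) * e ^ (j div 2 + 1 + ((?k - j) div 2 + 1))"
      unfolding unscale power_add by (simp only: mult_ac)
    ultimately show "Rbar j e * Rbar (?k - j) e
        = e ^ (n + 1) * ((if odd j then 1 else e) * (Rbar_scaled j e * Rbar_scaled (?k - j) e))"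
      by (simp add: mult_ac)
  qed simp
  moreover have "Rbar ?k e * Rbar_denom ?k e = -(3 + e) * (\<Sum>j\<in>{1..?k-1}. Rbar j e * Rbar (?k - j) e)"
    using assms elim by (intro Rbar_recurrence Rbar_denom_nonzero) simp_all
  ultimately have "e ^ (n + 1) * (Rbar_scaled ?k e * Rbar_denom ?k e)
      = e ^ (n + 1) * (-(3 + e) * (\<Sum>j\<in>{1..2*n-1}. (if odd j then 1 else e) * (Rbar_scaled j e * Rbar_scaled (?k - j) e)))"
    unfolding unscale[of ?k] by (simp add: sum_distrib_left algebra_simps)
  moreover have "e ^ (n + 1) \<noteq> 0"
    using elim by simp
  ultimately show ?case
    using mult_left_cancel by blast
qed

definition interleave :: "(nat \<Rightarrow> 'a) \<Rightarrow> (nat \<Rightarrow> 'a) \<Rightarrow> nat \<Rightarrow> 'a" where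
  "interleave x y j = (if odd j then x (j div 2) else y (j div 2))"

definition zero_head :: "(nat \<Rightarrow> 'a :: zero) \<Rightarrow> nat \<Rightarrow> 'a" where
  "zero_head y n = (if n = 0 then 0 else y n)"

lemma interleave_odd [simp]: "interleave x y (2 * p + 1) = x p"
  and interleave_Suc_double [simp]: "interleave x y (Suc (2 * p)) = x p"
  and interleave_even [simp]: "interleave x y (2 * p) = y p"
  by (simp_all add: interleave_def)

lemma sum_split_parity:
  fixes f :: "nat \<Rightarrow> 'a :: comm_monoid_add"
  shows "(\<Sum>j\<in>{1..2*m}. f j) = (\<Sum>p<m. f (2 * p + 1)) + (\<Sum>q\<in>{1..m}. f (2 * q))"
  by (induction m) (simp_all add: sum.cl_ivl_Suc add_ac)

lemma sum_split_parity_odd_bound: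
  fixes f :: "nat \<Rightarrow> 'a :: comm_monoid_add"
  assumes "n \<ge> 1"
  shows "(\<Sum>j\<in>{1..2*n-1}. f j) = (\<Sum>p<n. f (2 * p + 1)) + (\<Sum>q\<in>{1..n-1}. f (2 * q))"
proof -
  obtain m where n: "n = Suc m"
    using assms by (cases n) auto
  have "(\<Sum>j\<in>{1..2*n-1}. f j) = (\<Sum>j\<in>{1..2*m}. f j) + f (2 * m + 1)"
    unfolding n by (simp add: sum.cl_ivl_Suc)
  then show ?thesis
    unfolding sum_split_parity n by (simp add: add_ac)
qed

lemma fps_mult_zero_head_nth:
  fixes x y :: "nat \<Rightarrow> 'a :: comm_semiring_1"
  shows "(Abs_fps x * Abs_fps (zero_head y)) $ m = (\<Sum>p<m. x p * y (m - p))"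
  by (simp add: fps_mult_nth atLeast0AtMost lessThan_Suc_atMost[symmetric] zero_head_def)

lemma fps_zero_head_mult_nth:
  fixes x y :: "nat \<Rightarrow> 'a :: comm_semiring_1"
  shows "(Abs_fps (zero_head y) * Abs_fps x) $ m = (\<Sum>q\<in>{1..m}. y q * x (m - q))"
  by (simp add: fps_mult_nth sum.atLeast_Suc_atMost zero_head_def)

lemma fps_zero_head_mult_zero_head_nth:
  fixes y z :: "nat \<Rightarrow> 'a :: comm_semiring_1"
  shows "(Abs_fps (zero_head y) * Abs_fps (zero_head z)) $ n = (\<Sum>q\<in>{1..n-1}. y q * z (n - q))"
proof (cases n)
  case (Suc m)
  then show ?thesis
    unfolding fps_zero_head_mult_nth by (auto simp: sum.cl_ivl_Suc zero_head_def intro!: sum.cong)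
qed (simp add: fps_mult_nth zero_head_def)

lemma sum_interleave_odd:
  fixes x y z w :: "nat \<Rightarrow> 'a :: comm_semiring_1"
  shows "(\<Sum>j\<in>{1..2*m}. interleave x y j * interleave z w (2 * m + 1 - j))
    = (Abs_fps x * Abs_fps (zero_head w)) $ m + (Abs_fps (zero_head y) * Abs_fps z) $ m"
proof -
  have "(\<Sum>p<m. interleave x y (2 * p + 1) * interleave z w (2 * m + 1 - (2 * p + 1))) = (\<Sum>p<m. x p * w (m - p))"
    by (intro sum.cong) (auto simp flip: right_diff_distrib')
  moreover have "(\<Sum>q\<in>{1..m}. interleave x y (2 * q) * interleave z w (2 * m + 1 - 2 * q)) = (\<Sum>q\<in>{1..m}. y q * z (m - q))"
    by (intro sum.cong) (auto simp: Suc_diff_le simp flip: right_diff_distrib')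
  ultimately show ?thesis
    unfolding sum_split_parity fps_mult_zero_head_nth fps_zero_head_mult_nth by simp
qed

lemma sum_interleave_even:
  fixes x y z w :: "nat \<Rightarrow> 'a :: comm_semiring_1"
  assumes "n \<ge> 1"
  shows "(\<Sum>j\<in>{1..2*n-1}. if odd j then interleave x y j * interleave z w (2 * n - j) else 0)
      = (Abs_fps x * Abs_fps z) $ (n - 1)"
    and "(\<Sum>j\<in>{1..2*n-1}. if odd j then 0 else interleave x y j * interleave z w (2 * n - j))
      = (Abs_fps (zero_head y) * Abs_fps (zero_head w)) $ n"
proof -
  have "(\<Sum>p<n. interleave x y (2 * p + 1) * interleave z w (2 * n - (2 * p + 1))) = (\<Sum>p<n. x p * z (n - 1 - p))"
  proof (intro sum.cong)
    fix p assume "p \<in> {..<n}"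
    then have "2 * n - (2 * p + 1) = Suc (2 * (n - 1 - p))"
      by simp
    then show "interleave x y (2 * p + 1) * interleave z w (2 * n - (2 * p + 1)) = x p * z (n - 1 - p)"
      by simp
  qed simp
  then show "(\<Sum>j\<in>{1..2*n-1}. if odd j then interleave x y j * interleave z w (2 * n - j) else 0)
      = (Abs_fps x * Abs_fps z) $ (n - 1)"
    using assms unfolding sum_split_parity_odd_bound[OF assms]
    by (simp add: fps_mult_nth atLeast0AtMost lessThan_Suc_atMost[symmetric])
  have "(\<Sum>q\<in>{1..n-1}. interleave x y (2 * q) * interleave z w (2 * n - 2 * q)) = (\<Sum>q\<in>{1..n-1}. y q * w (n - q))"
    by (intro sum.cong) (auto simp flip: right_diff_distrib')
  then show "(\<Sum>j\<in>{1..2*n-1}. if odd j then 0 else interleave x y j * interleave z w (2 * n - j))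
      = (Abs_fps (zero_head y) * Abs_fps (zero_head w)) $ n"
    unfolding sum_split_parity_odd_bound[OF assms] fps_zero_head_mult_zero_head_nth by simp
qed

section \<open>The generating functions of the expansion coefficients\<close>

locale Rbar_expansions =
  fixes a b c d :: "nat \<Rightarrow> real"
  assumes odd_exp: "\<And>m. (\<lambda>e. Rbar (2*m+1) e - e^(m+1) * (a m + b m * e)) \<in> O[at 0](\<lambda>e. e^(m+3))"
    and even_exp: "\<And>n. n \<ge> 1 \<Longrightarrow> (\<lambda>e. Rbar (2*n) e - e^(n+1) * (c n + d n * e)) \<in> O[at 0](\<lambda>e. e^(n+3))"
begin

(* c 0 and d 0 are not constrained by the hypotheses, so they are excluded from the series. *)
abbreviation "\<alpha> \<equiv> Abs_fps a"
abbreviation "\<beta> \<equiv> Abs_fps b"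
abbreviation "\<gamma> \<equiv> Abs_fps (zero_head c)"
abbreviation "\<delta> \<equiv> Abs_fps (zero_head d)"

lemma first_order_expansion_Rbar_scaled:
  assumes "i \<ge> 1"
  shows "first_order_expansion (Rbar_scaled i) (interleave a c i) (interleave b d i)"
proof (cases "odd i")
  case True
  then obtain m where i: "i = 2 * m + 1"
    by (metis oddE)
  have "m + 3 = (m + 1) + 2"
    by simp
  then have "first_order_expansion (\<lambda>e. Rbar (2 * m + 1) e / e ^ (m + 1)) (a m) (b m)"
    using odd_exp[of m] by (intro first_order_expansion_of_bigo) (simp only:)
  then show ?thesis
    by (simp add: i Rbar_scaled_def[abs_def])
next
  case False
  then obtain n where i: "i = 2 * n"
    by (metis evenE)
  with assms have "n \<ge> 1"
    by simp
  have "n + 3 = (n + 1) + 2"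
    by simp
  then have "first_order_expansion (\<lambda>e. Rbar (2 * n) e / e ^ (n + 1)) (c n) (d n)"
    using even_exp[OF \<open>n \<ge> 1\<close>] by (intro first_order_expansion_of_bigo) (simp only:)
  then show ?thesis
    by (simp add: i Rbar_scaled_def[abs_def])
qed

lemma initial_coefficients: "a 0 = 1" "b 0 = 0"
proof -
  have "eventually (\<lambda>e. 1 = Rbar_scaled 1 e) (at 0)"
    using eventually_nonzero_at_0 by eventually_elim (simp add: Rbar_scaled_def)
  then have "first_order_expansion (Rbar_scaled 1) 1 0"
    by (rule first_order_expansion_cong[OF first_order_expansion_const])
  with first_order_expansion_Rbar_scaled[of 1] show "a 0 = 1" "b 0 = 0"
    using first_order_expansion_unique by (force simp: interleave_def)+
qed

lemma odd_coefficient_relations: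
  assumes "m \<ge> 1"
  shows "real m * a m = 3 * (\<alpha> * \<gamma>) $ m"
    and "2 * real m * b m = 6 * ((\<alpha> * \<delta>) $ m + (\<beta> * \<gamma>) $ m) - 6 * real m * (\<alpha> * \<gamma>) $ m - (\<alpha> * \<gamma>) $ m"
proof -
  let ?A = "interleave a c" and ?B = "interleave b d" and ?k = "2 * m + 1"
  let ?S\<^sub>0 = "\<Sum>j\<in>{1..2*m}. ?A j * ?A (?k - j)"
  let ?S\<^sub>1 = "\<Sum>j\<in>{1..2*m}. ?A j * ?B (?k - j) + ?B j * ?A (?k - j)"
  have "first_order_expansion (\<lambda>e. Rbar_scaled ?k e * - ((1 + e) * (\<Sum>i<2*m. (1 + e) ^ i)))
      (a m * (- 2 * real m)) (a m * (- real m * (2 * real m + 1)) + b m * (- 2 * real m))"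
    using first_order_expansion_mult[OF first_order_expansion_Rbar_scaled[of ?k] first_order_expansion_Rbar_denom_odd_quotient[of m]]
    by simp
  then have lhs: "first_order_expansion (\<lambda>e. -(3 + e) * (\<Sum>j\<in>{1..2*m}. Rbar_scaled j e * Rbar_scaled (?k - j) e))
      (a m * (- 2 * real m)) (a m * (- real m * (2 * real m + 1)) + b m * (- 2 * real m))"
    using Rbar_scaled_recurrence_odd[OF assms] by (rule first_order_expansion_cong)
  have "first_order_expansion (\<lambda>e. \<Sum>j\<in>{1..2*m}. Rbar_scaled j e * Rbar_scaled (?k - j) e) ?S\<^sub>0 ?S\<^sub>1"
    by (intro first_order_expansion_sum first_order_expansion_mult first_order_expansion_Rbar_scaled) auto
  from first_order_expansion_mult[OF first_order_expansion_affine[of "-3" "-1"] this]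
  have rhs: "first_order_expansion (\<lambda>e. -(3 + e) * (\<Sum>j\<in>{1..2*m}. Rbar_scaled j e * Rbar_scaled (?k - j) e))
      (-3 * ?S\<^sub>0) (-3 * ?S\<^sub>1 + -1 * ?S\<^sub>0)"
    by simp
  have "?S\<^sub>0 = 2 * (\<alpha> * \<gamma>) $ m"
    unfolding sum_interleave_odd by (simp add: mult.commute)
  moreover have "?S\<^sub>1 = 2 * ((\<alpha> * \<delta>) $ m + (\<beta> * \<gamma>) $ m)"
    unfolding sum.distrib sum_interleave_odd by (simp add: mult.commute)
  ultimately have lead: "real m * a m = 3 * (\<alpha> * \<gamma>) $ m"
    and second: "real m * (2 * real m + 1) * a m + 2 * real m * b m
      = 6 * ((\<alpha> * \<delta>) $ m + (\<beta> * \<gamma>) $ m) + 2 * (\<alpha> * \<gamma>) $ m"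
    using first_order_expansion_unique[OF lhs rhs] by (simp_all add: algebra_simps)
  show "real m * a m = 3 * (\<alpha> * \<gamma>) $ m"
    by (fact lead)
  have "real m * (2 * real m + 1) * a m = (2 * real m + 1) * (3 * (\<alpha> * \<gamma>) $ m)"
    by (simp flip: lead)
  with second show "2 * real m * b m = 6 * ((\<alpha> * \<delta>) $ m + (\<beta> * \<gamma>) $ m) - 6 * real m * (\<alpha> * \<gamma>) $ m - (\<alpha> * \<gamma>) $ m"
    by (simp add: algebra_simps)
qed

lemma even_coefficient_relations:
  assumes "n \<ge> 1"
  shows "2 * c n = -3 * (\<alpha> * \<alpha>) $ (n - 1)"
    and "(2 * real n + 1) * c n + 2 * d n = -6 * (\<alpha> * \<beta>) $ (n - 1) - 3 * (\<gamma> * \<gamma>) $ n - (\<alpha> * \<alpha>) $ (n - 1)"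
proof -
  let ?A = "interleave a c" and ?B = "interleave b d" and ?k = "2 * n"
  let ?S\<^sub>0 = "\<Sum>j\<in>{1..2*n-1}. if odd j then ?A j * ?A (?k - j) else 0"
  let ?S\<^sub>1 = "\<Sum>j\<in>{1..2*n-1}. if odd j then ?A j * ?B (?k - j) + ?B j * ?A (?k - j) else ?A j * ?A (?k - j)"
  have "first_order_expansion (\<lambda>e. Rbar_scaled ?k e * Rbar_denom ?k e) (c n * 2) (c n * (2 * real n + 1) + d n * 2)"
    using first_order_expansion_mult[OF first_order_expansion_Rbar_scaled[of ?k] first_order_expansion_Rbar_denom_even[of n]] assms
    by simp
  then have lhs: "first_order_expansion
      (\<lambda>e. -(3 + e) * (\<Sum>j\<in>{1..2*n-1}. (if odd j then 1 else e) * (Rbar_scaled j e * Rbar_scaled (?k - j) e)))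
      (c n * 2) (c n * (2 * real n + 1) + d n * 2)"
    using Rbar_scaled_recurrence_even[OF assms] by (rule first_order_expansion_cong)
  have weighted: "first_order_expansion (\<lambda>e. (if odd j then 1 else e) * f e)
      (if odd j then p else 0) (if odd j then q else p)" if "first_order_expansion f p q" for j f p q
    using that first_order_expansion_times_ident[OF that] by simp
  have "first_order_expansion
      (\<lambda>e. \<Sum>j\<in>{1..2*n-1}. (if odd j then 1 else e) * (Rbar_scaled j e * Rbar_scaled (?k - j) e)) ?S\<^sub>0 ?S\<^sub>1"
    by (intro first_order_expansion_sum weighted first_order_expansion_mult first_order_expansion_Rbar_scaled) auto
  from first_order_expansion_mult[OF first_order_expansion_affine[of "-3" "-1"] this]
  have rhs: "first_order_expansion
      (\<lambda>e. -(3 + e) * (\<Sum>j\<in>{1..2*n-1}. (if odd j then 1 else e) * (Rbar_scaled j e * Rbar_scaled (?k - j) e)))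
      (-3 * ?S\<^sub>0) (-3 * ?S\<^sub>1 + -1 * ?S\<^sub>0)"
    by simp
  have "?S\<^sub>0 = (\<alpha> * \<alpha>) $ (n - 1)"
    using sum_interleave_even(1)[OF assms] .
  moreover have "?S\<^sub>1 = (\<alpha> * \<beta>) $ (n - 1) + (\<beta> * \<alpha>) $ (n - 1) + (\<gamma> * \<gamma>) $ n"
  proof -
    have "?S\<^sub>1 = (\<Sum>j\<in>{1..2*n-1}. if odd j then ?A j * ?B (?k - j) else 0)
        + (\<Sum>j\<in>{1..2*n-1}. if odd j then ?B j * ?A (?k - j) else 0)
        + (\<Sum>j\<in>{1..2*n-1}. if odd j then 0 else ?A j * ?A (?k - j))"
      unfolding sum.distrib[symmetric] by (intro sum.cong) auto
    then show ?thesis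
      unfolding sum_interleave_even[OF assms] .
  qed
  ultimately show "2 * c n = -3 * (\<alpha> * \<alpha>) $ (n - 1)"
    and "(2 * real n + 1) * c n + 2 * d n = -6 * (\<alpha> * \<beta>) $ (n - 1) - 3 * (\<gamma> * \<gamma>) $ n - (\<alpha> * \<alpha>) $ (n - 1)"
    using first_order_expansion_unique[OF lhs rhs] by (simp_all add: mult.commute[of \<beta>] algebra_simps)
qed

lemma generating_function_ode_system:
  shows "fps_X * fps_deriv \<alpha> = 3 * \<alpha> * \<gamma>"
    and "2 * fps_X * fps_deriv \<beta> = 6 * (\<alpha> * \<delta> + \<beta> * \<gamma>) - 6 * fps_X * fps_deriv (\<alpha> * \<gamma>) - \<alpha> * \<gamma>"
    and "2 * \<gamma> = -3 * fps_X * \<alpha>\<^sup>2"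
    and "2 * \<delta> = -6 * fps_X * \<alpha> * \<beta> - 3 * \<gamma>\<^sup>2 - fps_X * \<alpha>\<^sup>2 - 2 * fps_X * fps_deriv \<gamma> - \<gamma>"
proof -
  have X_deriv_nth: "(fps_X * fps_deriv f) $ n = of_nat n * f $ n" for f :: "real fps" and n
    by (cases n) simp_all
  note nth_simps = X_deriv_nth fps_X_mult_nth fps_numeral_fps_const power2_eq_square mult.assoc zero_head_def
  show "fps_X * fps_deriv \<alpha> = 3 * \<alpha> * \<gamma>"
  proof (rule fps_ext)
    fix n
    show "(fps_X * fps_deriv \<alpha>) $ n = (3 * \<alpha> * \<gamma>) $ n"
      using odd_coefficient_relations(1)[of n] by (cases "n = 0") (simp add: nth_simps fps_mult_nth, simp add: nth_simps)
  qed
  show "2 * \<gamma> = -3 * fps_X * \<alpha>\<^sup>2"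
  proof (rule fps_ext)
    fix n
    show "(2 * \<gamma>) $ n = (-3 * fps_X * \<alpha>\<^sup>2) $ n"
      using even_coefficient_relations(1)[of n] by (cases "n = 0") (simp_all add: nth_simps)
  qed
  show "2 * \<delta> = -6 * fps_X * \<alpha> * \<beta> - 3 * \<gamma>\<^sup>2 - fps_X * \<alpha>\<^sup>2 - 2 * fps_X * fps_deriv \<gamma> - \<gamma>"
  proof (rule fps_ext)
    fix n
    show "(2 * \<delta>) $ n = (-6 * fps_X * \<alpha> * \<beta> - 3 * \<gamma>\<^sup>2 - fps_X * \<alpha>\<^sup>2 - 2 * fps_X * fps_deriv \<gamma> - \<gamma>) $ n"
      using even_coefficient_relations(2)[of n]
      by (cases "n = 0") (simp add: nth_simps fps_mult_nth, simp add: nth_simps, simp add: algebra_simps)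
  qed
  show "2 * fps_X * fps_deriv \<beta> = 6 * (\<alpha> * \<delta> + \<beta> * \<gamma>) - 6 * fps_X * fps_deriv (\<alpha> * \<gamma>) - \<alpha> * \<gamma>"
  proof (rule fps_ext)
    fix n
    show "(2 * fps_X * fps_deriv \<beta>) $ n = (6 * (\<alpha> * \<delta> + \<beta> * \<gamma>) - 6 * fps_X * fps_deriv (\<alpha> * \<gamma>) - \<alpha> * \<gamma>) $ n"
    proof (cases "n = 0")
      case False
      then show ?thesis
        using odd_coefficient_relations(2)[of n] by (simp add: nth_simps del: fps_deriv_mult)
    qed (simp add: nth_simps fps_mult_nth)
  qed
qed

end

section \<open>Binomial and logarithmic power series\<close>

definition binom_series :: "real \<Rightarrow> real \<Rightarrow> real fps" where
  "binom_series k c = Abs_fps (\<lambda>n. (c gchoose n) * k ^ n)"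

definition log_series :: "real \<Rightarrow> real fps" where
  "log_series k = Abs_fps (\<lambda>n. if n = 0 then 0 else (-1) ^ (n + 1) * k ^ n / real n)"

lemma binom_series_nth [simp]: "binom_series k c $ n = (c gchoose n) * k ^ n"
  by (simp add: binom_series_def)

lemma binom_series_mult: "binom_series k c * binom_series k d = binom_series k (c + d)"
proof (rule fps_ext)
  fix n
  have "(binom_series k c * binom_series k d) $ n = (\<Sum>i=0..n. (c gchoose i) * (d gchoose (n - i))) * k ^ n"
    unfolding fps_mult_nth sum_distrib_right
    by (intro sum.cong) (simp_all add: algebra_simps flip: power_add)
  then show "(binom_series k c * binom_series k d) $ n = binom_series k (c + d) $ n"
    by (simp add: gbinomial_Vandermonde)
qed

lemma binom_series_power: "binom_series k c ^ n = binom_series k (real n * c)"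
proof (induction n)
  case 0
  show ?case by (rule fps_ext) (simp add: gbinomial_0_left)
next
  case (Suc n)
  then show ?case by (simp add: binom_series_mult algebra_simps)
qed

lemma binom_series_1: "binom_series k 1 = 1 + fps_const k * fps_X"
proof (rule fps_ext)
  fix n show "binom_series k 1 $ n = (1 + fps_const k * fps_X) $ n"
    by (cases n; cases "n = 1") (auto simp: gbinomial_Suc)
qed

lemma binom_series_deriv:
  "(1 + fps_const k * fps_X) * fps_deriv (binom_series k c) = fps_const (k * c) * binom_series k c"
proof (rule fps_ext)
  fix n
  have absorb: "real (Suc n) * (c gchoose Suc n) = (c - real n) * (c gchoose n)"
    using gbinomial_absorption[of n c] gbinomial_absorb_comp[of c n] by simp
  have "((1 + fps_const k * fps_X) * fps_deriv (binom_series k c)) $ n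
      = real (Suc n) * (c gchoose Suc n) * k ^ Suc n + k * (real n * (c gchoose n) * k ^ n)"
    by (cases n) (simp_all add: algebra_simps)
  also have "\<dots> = k * c * ((c gchoose n) * k ^ n)"
    unfolding absorb by (simp add: algebra_simps)
  finally show "((1 + fps_const k * fps_X) * fps_deriv (binom_series k c)) $ n
      = (fps_const (k * c) * binom_series k c) $ n" by simp
qed

lemma log_series_deriv: "fps_deriv (log_series k) = fps_const k * binom_series k (-1)"
  by (rule fps_ext) (simp add: log_series_def gbinomial_minus flip: binomial_gbinomial)

lemma fps_eq_0_if_linear_ode:
  fixes G H :: "'a :: field_char_0 fps"
  assumes ode: "fps_const c * fps_deriv G = H * G" and "c \<noteq> 0" and "G $ 0 = 0"
  shows "G = 0"
proof -
  have "\<forall>j\<le>n. G $ j = 0" for n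
  proof (induction n)
    case 0
    then show ?case using \<open>G $ 0 = 0\<close> by simp
  next
    case (Suc n)
    have "(H * G) $ n = 0"
      using Suc.IH by (auto simp: fps_mult_nth intro!: sum.neutral)
    then have "c * (of_nat (Suc n) * G $ Suc n) = 0"
      using arg_cong[OF ode, of "\<lambda>F. F $ n"] by simp
    then have "G $ Suc n = 0"
      using \<open>c \<noteq> 0\<close> by (simp del: of_nat_Suc)
    with Suc.IH show ?case using le_Suc_eq by auto
  qed
  then show ?thesis by (auto simp: fps_eq_iff)
qed

lemma binom_series_neg_half_square: "(1 + fps_const k * fps_X) * binom_series k (-1/2) ^ 2 = 1"
proof -
  have "binom_series k (-1/2) ^ 2 = binom_series k (-1)"
    by (simp add: binom_series_power)
  moreover have "binom_series k 1 * binom_series k (-1) = 1"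
    using binom_series_power[of k 0 0] by (simp add: binom_series_mult)
  ultimately show ?thesis
    by (simp add: binom_series_1)
qed

lemma binom_series_neg_half_deriv:
  "2 * fps_deriv (binom_series k (-1/2)) = - fps_const k * binom_series k (-1/2) ^ 3"
proof -
  define Q where "Q = binom_series k (-1/2)"
  have "2 * fps_deriv Q = 2 * ((1 + fps_const k * fps_X) * fps_deriv Q) * Q ^ 2"
    using binom_series_neg_half_square[of k] unfolding Q_def[symmetric] by algebra
  also have "\<dots> = 2 * fps_const (- k / 2) * Q ^ 3"
    using binom_series_deriv[of k "-1/2"] unfolding Q_def[symmetric]
    by (simp add: algebra_simps power3_eq_cube power2_eq_square)
  also have "2 * fps_const (- k / 2) = - fps_const k"
    by (simp add: fps_numeral_fps_const flip: fps_const_mult)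
  finally show ?thesis
    unfolding Q_def .
qed

lemma eq_binom_series_neg_half_if_ode:
  fixes \<alpha> :: "real fps"
  assumes "\<alpha> $ 0 = 1" and "2 * fps_deriv \<alpha> = - fps_const k * \<alpha> ^ 3"
  shows "\<alpha> = binom_series k (-1/2)"
proof -
  define Q where "Q = binom_series k (-1/2)"
  have "2 * fps_deriv (\<alpha> - Q) = (- fps_const k * (\<alpha>\<^sup>2 + \<alpha> * Q + Q\<^sup>2)) * (\<alpha> - Q)"
    using assms(2) binom_series_neg_half_deriv[of k] unfolding Q_def[symmetric]
    by (simp add: algebra_simps power3_eq_cube power2_eq_square)
  then have "\<alpha> - Q = 0"
    by (intro fps_eq_0_if_linear_ode[where c = 2 and H = "- fps_const k * (\<alpha>\<^sup>2 + \<alpha> * Q + Q\<^sup>2)"])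
       (simp_all add: fps_numeral_fps_const \<open>\<alpha> $ 0 = 1\<close> Q_def)
  then show ?thesis
    by (simp add: Q_def)
qed

lemma ode_system_first_component:
  fixes \<alpha> \<gamma> :: "real fps"
  assumes "\<alpha> $ 0 = 1" and "fps_X * fps_deriv \<alpha> = 3 * \<alpha> * \<gamma>" and "2 * \<gamma> = -3 * fps_X * \<alpha>\<^sup>2"
  shows "\<alpha> = binom_series 9 (-1/2)"
proof -
  have "fps_X * (2 * fps_deriv \<alpha>) = fps_X * (-9 * \<alpha> ^ 3)"
    using assms(2,3) by algebra
  then have "2 * fps_deriv \<alpha> = - fps_const 9 * \<alpha> ^ 3"
    by (simp add: fps_numeral_fps_const)
  with assms(1) show ?thesis
    by (rule eq_binom_series_neg_half_if_ode)
qed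

lemma ode_system_second_component:
  fixes \<beta> \<gamma> \<delta> :: "real fps"
  defines "Q \<equiv> binom_series 9 (-1/2)"
  assumes "\<beta> $ 0 = 0"
    and ode_\<beta>: "2 * fps_X * fps_deriv \<beta> = 6 * (Q * \<delta> + \<beta> * \<gamma>) - 6 * fps_X * fps_deriv (Q * \<gamma>) - Q * \<gamma>"
    and eq_\<gamma>: "2 * \<gamma> = -3 * fps_X * Q\<^sup>2"
    and eq_\<delta>: "2 * \<delta> = -6 * fps_X * Q * \<beta> - 3 * \<gamma>\<^sup>2 - fps_X * Q\<^sup>2 - 2 * fps_X * fps_deriv \<gamma> - \<gamma>"
  shows "8 * \<beta> = Q ^ 3 * (11 * log_series 9 - 15 * fps_X)"
proof -
  note Q_square = binom_series_neg_half_square[of 9, folded fps_numeral_fps_const Q_def]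
  note Q_deriv = binom_series_neg_half_deriv[of 9, folded fps_numeral_fps_const Q_def]
  have L_deriv: "fps_deriv (log_series 9) = 9 * Q ^ 2"
    by (simp add: Q_def binom_series_power log_series_deriv fps_numeral_fps_const)
  have \<gamma>_deriv: "2 * fps_deriv \<gamma> = -3 * (Q\<^sup>2 + fps_X * Q * (2 * fps_deriv Q))"
    using arg_cong[OF eq_\<gamma>, of fps_deriv] by (simp add: algebra_simps power2_eq_square)
  have ode_\<beta>': "2 * fps_X * fps_deriv \<beta> = 6 * (Q * \<delta> + \<beta> * \<gamma>) - 6 * fps_X * (Q * fps_deriv \<gamma> + fps_deriv Q * \<gamma>) - Q * \<gamma>"
    using ode_\<beta> by (simp add: algebra_simps)
  define Y where "Y = 11 * log_series 9 - 15 * fps_X"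
  define \<Delta> where "\<Delta> = 8 * \<beta> - Q ^ 3 * Y"
  have \<Delta>_deriv: "fps_deriv \<Delta> = 8 * fps_deriv \<beta> - (3 * Q\<^sup>2 * fps_deriv Q * Y + Q ^ 3 * (99 * Q\<^sup>2 - 15))"
    unfolding \<Delta>_def Y_def by (simp add: L_deriv fps_deriv_power' algebra_simps)
  have "fps_X * (2 * (8 * fps_deriv \<beta> - (3 * Q\<^sup>2 * fps_deriv Q * Y + Q ^ 3 * (99 * Q\<^sup>2 - 15))))
      = fps_X * (-27 * Q\<^sup>2 * (8 * \<beta> - Q ^ 3 * Y))"
    using eq_\<gamma> \<gamma>_deriv ode_\<beta>' eq_\<delta> Q_deriv Q_square by algebra
  then have "fps_X * (2 * fps_deriv \<Delta>) = fps_X * (-27 * Q\<^sup>2 * \<Delta>)"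
    unfolding \<Delta>_deriv by (simp only: \<Delta>_def)
  then have "2 * fps_deriv \<Delta> = -27 * Q\<^sup>2 * \<Delta>"
    using mult_left_cancel[OF fps_X_neq_zero] by blast
  moreover have "\<Delta> $ 0 = 0"
    by (simp add: \<Delta>_def Y_def \<open>\<beta> $ 0 = 0\<close> log_series_def fps_mult_nth)
  ultimately have "\<Delta> = 0"
    using fps_eq_0_if_linear_ode[of 2 \<Delta> "-27 * Q\<^sup>2"] by (simp add: fps_numeral_fps_const)
  then show ?thesis
    by (simp add: \<Delta>_def Y_def)
qed

lemma ode_system_solution:
  fixes \<alpha> \<beta> \<gamma> \<delta> :: "real fps"
  assumes "\<alpha> $ 0 = 1" and "\<beta> $ 0 = 0"
    and ode_\<alpha>: "fps_X * fps_deriv \<alpha> = 3 * \<alpha> * \<gamma>"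
    and ode_\<beta>: "2 * fps_X * fps_deriv \<beta> = 6 * (\<alpha> * \<delta> + \<beta> * \<gamma>) - 6 * fps_X * fps_deriv (\<alpha> * \<gamma>) - \<alpha> * \<gamma>"
    and eq_\<gamma>: "2 * \<gamma> = -3 * fps_X * \<alpha>\<^sup>2"
    and eq_\<delta>: "2 * \<delta> = -6 * fps_X * \<alpha> * \<beta> - 3 * \<gamma>\<^sup>2 - fps_X * \<alpha>\<^sup>2 - 2 * fps_X * fps_deriv \<gamma> - \<gamma>"
  shows "8 * \<beta> = binom_series 9 (-3/2) * (11 * log_series 9 - 15 * fps_X)"
    and "8 * \<delta> = fps_X * (14 + 36 * fps_X - 33 * log_series 9) * binom_series 9 (-2)"
proof -
  define Q where "Q = binom_series 9 (-1/2)"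
  note Q_square = binom_series_neg_half_square[of 9, folded fps_numeral_fps_const Q_def]
  note Q_deriv = binom_series_neg_half_deriv[of 9, folded fps_numeral_fps_const Q_def]
  have "\<alpha> = Q"
    unfolding Q_def using \<open>\<alpha> $ 0 = 1\<close> ode_\<alpha> eq_\<gamma> by (rule ode_system_first_component)
  note system = ode_\<beta> eq_\<gamma> eq_\<delta>
  note substituted = system[unfolded \<open>\<alpha> = Q\<close>]
  have \<beta>_closed: "8 * \<beta> = Q ^ 3 * (11 * log_series 9 - 15 * fps_X)"
    using \<open>\<beta> $ 0 = 0\<close> substituted unfolding Q_def by (rule ode_system_second_component)
  then show "8 * \<beta> = binom_series 9 (-3/2) * (11 * log_series 9 - 15 * fps_X)"
    by (simp add: Q_def binom_series_power)
  have \<gamma>_deriv: "2 * fps_deriv \<gamma> = -3 * (Q\<^sup>2 + fps_X * Q * (2 * fps_deriv Q))"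
    using arg_cong[OF substituted(2), of fps_deriv] by (simp add: algebra_simps power2_eq_square)
  have "2 * (8 * \<delta>) = 2 * (fps_X * (14 + 36 * fps_X - 33 * log_series 9) * Q ^ 4)"
    using \<beta>_closed substituted(2,3) \<gamma>_deriv Q_deriv Q_square by algebra
  then have "8 * \<delta> = fps_X * (14 + 36 * fps_X - 33 * log_series 9) * Q ^ 4"
    by (subst (asm) mult_left_cancel) simp_all
  then show "8 * \<delta> = fps_X * (14 + 36 * fps_X - 33 * log_series 9) * binom_series 9 (-2)"
    by (simp add: Q_def binom_series_power)
qed

section \<open>Evaluation of the generating functions\<close>

lemma norm_less_fps_conv_radius_add:
  "norm z < fps_conv_radius f \<Longrightarrow> norm z < fps_conv_radius g \<Longrightarrow> norm z < fps_conv_radius (f + g)"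
  using fps_conv_radius_add[of f g] by (meson less_le_trans min_less_iff_conj)

lemma norm_less_fps_conv_radius_diff:
  "norm z < fps_conv_radius f \<Longrightarrow> norm z < fps_conv_radius g \<Longrightarrow> norm z < fps_conv_radius (f - g)"
  using fps_conv_radius_diff[of f g] by (meson less_le_trans min_less_iff_conj)

lemma norm_less_fps_conv_radius_mult:
  "norm z < fps_conv_radius f \<Longrightarrow> norm z < fps_conv_radius g \<Longrightarrow> norm z < fps_conv_radius (f * g)"
  using fps_conv_radius_mult[of f g] by (meson less_le_trans min_less_iff_conj)

lemma norm_less_fps_conv_radius_binom_series:
  assumes "\<bar>k * u\<bar> < 1"
  shows "norm u < fps_conv_radius (binom_series k c)"
proof (cases "k = 0")
  case True
  then have "binom_series k c = 1"
    by (intro fps_ext) simp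
  then show ?thesis by simp
next
  case False
  have "fps_conv_radius (binom_series k c) = conv_radius (\<lambda>n. c gchoose n) / ereal \<bar>k\<bar>"
    using False by (simp add: binom_series_def fps_conv_radius_def conv_radius_mult_power_right)
  moreover have "ereal \<bar>u\<bar> < 1 / ereal \<bar>k\<bar>"
    using assms False by (simp add: abs_mult field_simps one_ereal_def)
  ultimately show ?thesis
    by (auto simp: conv_radius_gchoose ereal_divide_less_iff one_ereal_def intro: less_le_trans)
qed

lemma norm_less_fps_conv_radius_log_series:
  assumes "\<bar>k * u\<bar> < 1"
  shows "norm u < fps_conv_radius (log_series k)"
proof (cases "k = 0")
  case True
  then have "log_series k = 0"
    by (intro fps_ext) (simp add: log_series_def)
  then show ?thesis by simp
next
  case False
  have "fps_conv_radius (log_series k) = conv_radius (\<lambda>n. fps_ln (1 :: real) $ n * k ^ n)"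
    unfolding fps_conv_radius_def log_series_def
    by (rule conv_radius_cong_weak) (auto simp: fps_ln_nth gr0_conv_Suc)
  also have "\<dots> = 1 / ereal \<bar>k\<bar>"
    using False by (simp add: conv_radius_mult_power_right flip: fps_conv_radius_def)
  finally show ?thesis
    using assms False by (simp add: abs_mult field_simps one_ereal_def)
qed

lemma eval_binom_series:
  assumes "\<bar>k * u\<bar> < 1"
  shows "eval_fps (binom_series k c) u = (1 + k * u) powr c"
  using gen_binomial_real[OF assms, of c]
  by (simp add: eval_fps_def sums_iff power_mult_distrib mult.assoc)

lemma eval_log_series:
  assumes "\<bar>k * u\<bar> < 1"
  shows "eval_fps (log_series k) u = ln (1 + k * u)"
proof -
  have summable: "summable (\<lambda>n. log_series k $ n * u ^ n)"
    using norm_less_fps_conv_radius_log_series[OF assms] by (rule summable_fps)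
  have "ln (1 + k * u) = (\<Sum>n. (-1) ^ n * (1 / real (n + 1)) * ((1 + k * u) - 1) ^ Suc n)"
    using assms by (intro ln_series) auto
  also have "\<dots> = (\<Sum>n. log_series k $ Suc n * u ^ Suc n)"
    by (rule suminf_cong) (simp add: log_series_def field_simps)
  also have "\<dots> = eval_fps (log_series k) u"
    using suminf_split_head[OF summable] by (simp add: eval_fps_def log_series_def)
  finally show ?thesis ..
qed

lemma sums_closed_forms:
  assumes "\<bar>9 * u\<bar> < 1"
  shows "(\<lambda>n. (binom_series 9 (-3/2) * (11 * log_series 9 - 15 * fps_X)) $ n * u ^ n) sums
           ((1 + 9 * u) powr (-3/2) * (11 * ln (1 + 9 * u) - 15 * u))"
    and "(\<lambda>n. (fps_X * (14 + 36 * fps_X - 33 * log_series 9) * binom_series 9 (-2)) $ n * u ^ n) sums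
           (u * (14 + 36 * u - 33 * ln (1 + 9 * u)) * (1 + 9 * u) powr (-2))"
proof -
  note radius = norm_less_fps_conv_radius_binom_series[OF assms] norm_less_fps_conv_radius_log_series[OF assms]
    norm_less_fps_conv_radius_add norm_less_fps_conv_radius_diff norm_less_fps_conv_radius_mult
  note eval = eval_binom_series[OF assms] eval_log_series[OF assms] eval_fps_add eval_fps_diff eval_fps_mult
  show "(\<lambda>n. (binom_series 9 (-3/2) * (11 * log_series 9 - 15 * fps_X)) $ n * u ^ n) sums
           ((1 + 9 * u) powr (-3/2) * (11 * ln (1 + 9 * u) - 15 * u))"
    using sums_eval_fps[of u "binom_series 9 (-3/2) * (11 * log_series 9 - 15 * fps_X)"]
    by (simp add: radius eval del: real_norm_def)
  show "(\<lambda>n. (fps_X * (14 + 36 * fps_X - 33 * log_series 9) * binom_series 9 (-2)) $ n * u ^ n) sums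
           (u * (14 + 36 * u - 33 * ln (1 + 9 * u)) * (1 + 9 * u) powr (-2))"
    using sums_eval_fps[of u "fps_X * (14 + 36 * fps_X - 33 * log_series 9) * binom_series 9 (-2)"]
    by (simp add: radius eval del: real_norm_def)
qed

lemma closed_form_sums:
  fixes \<beta> \<delta> :: "real fps" and \<tau> :: real
  assumes \<beta>_closed: "8 * \<beta> = binom_series 9 (-3/2) * (11 * log_series 9 - 15 * fps_X)"
    and \<delta>_closed: "8 * \<delta> = fps_X * (14 + 36 * fps_X - 33 * log_series 9) * binom_series 9 (-2)"
    and "\<bar>\<tau>\<bar> < 1/3"
  shows "(\<lambda>m. \<beta> $ m * \<tau>^(2*m+1)) sums
           (- (\<tau> * (45 * \<tau>^2 - 33 * ln (1 + 9 * \<tau>^2))) / (24 * (1 + 9 * \<tau>^2) powr (3/2)))"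
    and "(\<lambda>n. \<delta> $ Suc n * \<tau>^(2 * Suc n)) sums
           (\<tau>^2 * (14 + 36 * \<tau>^2 - 33 * ln (1 + 9 * \<tau>^2)) / (8 * (1 + 9 * \<tau>^2)^2))"
proof -
  define u where "u = \<tau>^2"
  have "\<bar>\<tau>\<bar>^2 < (1/3)^2"
    using \<open>\<bar>\<tau>\<bar> < 1/3\<close> by (intro power_strict_mono) auto
  then have u: "\<bar>9 * u\<bar> < 1"
    by (simp add: u_def power2_eq_square)
  then have positive: "1 + 9 * u > 0"
    by simp
  have "(\<lambda>n. (8 * \<beta>) $ n * u ^ n) sums ((1 + 9 * u) powr (-3/2) * (11 * ln (1 + 9 * u) - 15 * u))"
    unfolding \<beta>_closed by (rule sums_closed_forms(1)[OF u])
  then have "(\<lambda>n. \<tau> * ((8 * \<beta>) $ n * u ^ n / 8)) sums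
      (\<tau> * ((1 + 9 * u) powr (-3/2) * (11 * ln (1 + 9 * u) - 15 * u) / 8))"
    by (intro sums_mult sums_divide)
  moreover have "(\<lambda>n. \<tau> * ((8 * \<beta>) $ n * u ^ n / 8)) = (\<lambda>m. \<beta> $ m * \<tau>^(2*m+1))"
    unfolding u_def power_mult[symmetric] by (simp add: fps_numeral_fps_const mult_ac)
  moreover have "\<tau> * ((1 + 9 * u) powr (-3/2) * (11 * ln (1 + 9 * u) - 15 * u) / 8)
      = - (\<tau> * (45 * \<tau>^2 - 33 * ln (1 + 9 * \<tau>^2))) / (24 * (1 + 9 * \<tau>^2) powr (3/2))"
    using positive by (simp add: u_def powr_minus_divide field_simps)
  ultimately show "(\<lambda>m. \<beta> $ m * \<tau>^(2*m+1)) sums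
           (- (\<tau> * (45 * \<tau>^2 - 33 * ln (1 + 9 * \<tau>^2))) / (24 * (1 + 9 * \<tau>^2) powr (3/2)))"
    by (simp only:)
  have "(\<lambda>n. (8 * \<delta>) $ n * u ^ n) sums (u * (14 + 36 * u - 33 * ln (1 + 9 * u)) * (1 + 9 * u) powr (-2))"
    unfolding \<delta>_closed by (rule sums_closed_forms(2)[OF u])
  moreover have "(8 * \<delta>) $ 0 = 0"
    by (simp add: \<delta>_closed)
  ultimately have "(\<lambda>n. (8 * \<delta>) $ Suc n * u ^ Suc n / 8) sums
      (u * (14 + 36 * u - 33 * ln (1 + 9 * u)) * (1 + 9 * u) powr (-2) / 8)"
    by (intro sums_divide, subst sums_Suc_iff[of "\<lambda>n. (8 * \<delta>) $ n * u ^ n"]) simp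
  moreover have "(\<lambda>n. (8 * \<delta>) $ Suc n * u ^ Suc n / 8) = (\<lambda>n. \<delta> $ Suc n * \<tau>^(2 * Suc n))"
    unfolding u_def power_mult[symmetric] by (simp add: fps_numeral_fps_const)
  moreover have "u * (14 + 36 * u - 33 * ln (1 + 9 * u)) * (1 + 9 * u) powr (-2) / 8
      = \<tau>^2 * (14 + 36 * \<tau>^2 - 33 * ln (1 + 9 * \<tau>^2)) / (8 * (1 + 9 * \<tau>^2)^2)"
    using positive by (simp add: u_def powr_minus_divide powr_realpow)
  ultimately show "(\<lambda>n. \<delta> $ Suc n * \<tau>^(2 * Suc n)) sums
           (\<tau>^2 * (14 + 36 * \<tau>^2 - 33 * ln (1 + 9 * \<tau>^2)) / (8 * (1 + 9 * \<tau>^2)^2))"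
    by (simp only:)
qed

theorem mainTheorem3:
  fixes a b c d :: "nat \<Rightarrow> real" and \<tau> :: real
  assumes odd_exp: "\<And>m. (\<lambda>e. Rbar (2*m+1) e - e^(m+1) * (a m + b m * e))
                         \<in> O[at 0](\<lambda>e. e^(m+3))"
      and even_exp: "\<And>n. n \<ge> 1 \<Longrightarrow> (\<lambda>e. Rbar (2*n) e - e^(n+1) * (c n + d n * e))
                         \<in> O[at 0](\<lambda>e. e^(n+3))"
      and tau: "\<bar>\<tau>\<bar> < 1/3"
  shows "(\<lambda>m. b m * \<tau>^(2*m+1)) sums
           (- (\<tau> * (45 * \<tau>^2 - 33 * ln (1 + 9 * \<tau>^2))) / (24 * (1 + 9 * \<tau>^2) powr (3/2)))
       \<and> (\<lambda>n. d (Suc n) * \<tau>^(2 * Suc n)) sums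
           (\<tau>^2 * (14 + 36 * \<tau>^2 - 33 * ln (1 + 9 * \<tau>^2)) / (8 * (1 + 9 * \<tau>^2)^2))"
proof -
  interpret Rbar_expansions a b c d
    using odd_exp even_exp by unfold_locales
  have "8 * Abs_fps b = binom_series 9 (-3/2) * (11 * log_series 9 - 15 * fps_X)"
    and "8 * Abs_fps (zero_head d) = fps_X * (14 + 36 * fps_X - 33 * log_series 9) * binom_series 9 (-2)"
    using ode_system_solution[OF _ _ generating_function_ode_system] initial_coefficients by simp_all
  from closed_form_sums[OF this tau] show ?thesis
    by (simp add: zero_head_def)
qed

end
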